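(* Let $\phi(\mathbf x,\theta)=\arccos\big((\operatorname{trace}(\theta^\top\mathbf x)-1)/2\big)$ for $\mathbf x,\theta\in\mathrm{SO}(3)$, and let $h\colon L^\infty(\mathrm{SO}(3))\to\mathbb R$ be bounded (maps bounded sets to bounded sets) with $h(g\circ\psi)=h(g)$ for all $g\in L^\infty(\mathrm{SO}(3))$ and every bijection $\psi\colon\mathrm{SO}(3)\to\mathrm{SO}(3)$. Let $\mu_0,\nu_0\in\mathcal P^+_{\phi,c}(\mathrm{SO}(3))$ satisfy $\mathcal N_{h,\phi}[\mu_0]\neq\mathcal N_{h,\phi}[\nu_0]$ and consider $$\mathbb F=\{(\mathbf R\cdot)_\#\mu_0:\mathbf R\in\mathrm{SO}(3)\},\qquad \mathbb G=\{(\mathbf R\cdot)_\#\nu_0:\mathbf R\in\mathrm{SO}(3)\}.$$ Then $\mathbb F,\mathbb G\subset\mathcal P^+_{\phi,c}(\mathrm{SO}(3))$, and $\mathcal N_{h,\phi}[\mathbb F]$ and $\mathcal N_{h,\phi}[\mathbb G]$ are linearly separable in $L^\infty_\rho(\mathbb R)$.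
   Context: For $\theta\in\mathrm{SO}(3)$ and a finite Borel measure $\mu$ on $\mathrm{SO}(3)$, the restricted Radon transform on $\mathrm{SO}(3)$ is $\mathcal R_{\phi,\theta}[\mu]=(\phi(\cdot,\theta))_\#\mu$. Fix a reference Borel probability measure $\rho$ on $\mathbb R$ without atoms. For a probability measure $\nu$ on $\mathbb R$ with $F_\nu(t)=\nu((-\infty,t])$, let $F_\nu^{[-1]}(t)=\inf\{s:F_\nu(s)>t\}$ and the CDT $\hat\nu=F_\nu^{[-1]}\circ F_\rho$; $\widehat{\mathcal R}_{\phi,\theta}[\mu]$ is the CDT of $\mathcal R_{\phi,\theta}[\mu]$. For $g\in L^2_\rho(\mathbb R)$, $\operatorname{mean}(g)=\int g\,\mathrm d\rho$, $\operatorname{std}(g)=(\int|g-\operatorname{mean}(g)|^2\mathrm d\rho)^{1/2}$; for a probability measure on $\mathbb R$, $\operatorname{std}$ is its standard deviation. $\mathcal P^+_{\phi,c}(\mathrm{SO}(3))$ is the set of Borel probability measures $\mu$ on $\mathrm{SO}(3)$ for which there is $c>0$ with $\operatorname{std}(\mathcal R_{\phi,\theta}[\mu])\ge c$ for all $\theta\in\mathrm{SO}(3)$. For such $\mu$, $\mathcal N_\phi[\mu](t,\theta)=\big(\widehat{\mathcal R}_{\phi,\theta}[\mu](t)-\operatorname{mean}(\widehat{\mathcal R}_{\phi,\theta}[\mu])\big)/\operatorname{std}(\widehat{\mathcal R}_{\phi,\theta}[\mu])$ and $\mathcal N_{h,\phi}[\mu](t)=h(\mathcal N_\phi[\mu](t,\cdot))$.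 Subsets $A,B$ of a normed space $V$ are linearly separable if there exist a continuous linear functional $\ell$ on $V$ and $c\in\mathbb R$ with $\ell>c$ on $A$ and $\ell<c$ on $B$.
   Formalization: The functions $\mathcal N_{h,\phi}[\mu_0]$ and $\mathcal N_{h,\phi}[\nu_0]$ are also assumed Borel measurable, and $\mathcal N_{h,\phi}[\mu_0]\neq\mathcal N_{h,\phi}[\nu_0]$ means that they differ on a set of positive $\rho$-measure. Each condition added here is assumed in the paper as well or is needed for the statement above to hold. *)

theory Defs
  imports "HOL-Analysis.Analysis" "HOL-Probability.Probability"
begin

type_synonym mat3 = "real^3^3"

definition SO3 :: "mat3 set" where
  "SO3 = {A. orthogonal_matrix A \<and> det A = 1}"

definition phi :: "mat3 \<Rightarrow> mat3 \<Rightarrow> real" where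
  "phi x \<theta> = arccos ((trace (transpose \<theta> ** x) - 1) / 2)"

definition prob_SO3 :: "mat3 measure \<Rightarrow> bool" where
  "prob_SO3 \<mu> \<longleftrightarrow> sets \<mu> = sets (restrict_space borel SO3) \<and> prob_space \<mu>"

definition radon :: "mat3 measure \<Rightarrow> mat3 \<Rightarrow> real measure" where
  "radon \<mu> \<theta> = distr \<mu> borel (\<lambda>x. phi x \<theta>)"

definition std_meas :: "real measure \<Rightarrow> real" where
  "std_meas \<nu> = sqrt (\<integral>x. (x - (\<integral>y. y \<partial>\<nu>))\<^sup>2 \<partial>\<nu>)"

definition cdf_inv :: "real measure \<Rightarrow> real \<Rightarrow> real" where
  "cdf_inv \<nu> t = Inf {s. cdf \<nu> s > t}"

definition cdt :: "real measure \<Rightarrow> real measure \<Rightarrow> real \<Rightarrow> real" where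
  "cdt \<rho> \<nu> = cdf_inv \<nu> \<circ> cdf \<rho>"

definition mean_fn :: "real measure \<Rightarrow> (real \<Rightarrow> real) \<Rightarrow> real" where
  "mean_fn \<rho> g = (\<integral>t. g t \<partial>\<rho>)"

definition std_fn :: "real measure \<Rightarrow> (real \<Rightarrow> real) \<Rightarrow> real" where
  "std_fn \<rho> g = sqrt (\<integral>t. \<bar>g t - mean_fn \<rho> g\<bar>\<^sup>2 \<partial>\<rho>)"

definition P_plus :: "mat3 measure set" where
  "P_plus = {\<mu>. prob_SO3 \<mu> \<and> (\<exists>c>0. \<forall>\<theta>\<in>SO3. std_meas (radon \<mu> \<theta>) \<ge> c)}"

definition N_phi :: "real measure \<Rightarrow> mat3 measure \<Rightarrow> real \<Rightarrow> mat3 \<Rightarrow> real" where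
  "N_phi \<rho> \<mu> t \<theta> =
     (cdt \<rho> (radon \<mu> \<theta>) t - mean_fn \<rho> (cdt \<rho> (radon \<mu> \<theta>)))
       / std_fn \<rho> (cdt \<rho> (radon \<mu> \<theta>))"

definition N_h :: "((mat3 \<Rightarrow> real) \<Rightarrow> real) \<Rightarrow> real measure \<Rightarrow> mat3 measure \<Rightarrow> real \<Rightarrow> real" where
  "N_h h \<rho> \<mu> t = h (\<lambda>\<theta>. N_phi \<rho> \<mu> t \<theta>)"

definition rot :: "mat3 \<Rightarrow> mat3 measure \<Rightarrow> mat3 measure" where
  "rot R \<mu> = distr \<mu> (restrict_space borel SO3) (\<lambda>x. R ** x)"

text \<open>Representatives of elements of L^infty_rho(R): Borel measurable, essentially bounded\<close>
definition Linf :: "real measure \<Rightarrow> (real \<Rightarrow> real) set" where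
  "Linf \<rho> = {f. f \<in> borel_measurable \<rho> \<and> (\<exists>B. AE t in \<rho>. \<bar>f t\<bar> \<le> B)}"

text \<open>Continuous linear functionals on L^infty_rho(R): linear, and
  |l f| <= C * ||f||_infty, expressed via every a.e. bound B of |f|.\<close>
definition cont_lin_Linf :: "real measure \<Rightarrow> ((real \<Rightarrow> real) \<Rightarrow> real) \<Rightarrow> bool" where
  "cont_lin_Linf \<rho> L \<longleftrightarrow>
     (\<forall>f\<in>Linf \<rho>. \<forall>g\<in>Linf \<rho>. L (\<lambda>t. f t + g t) = L f + L g) \<and>
     (\<forall>a. \<forall>f\<in>Linf \<rho>. L (\<lambda>t. a * f t) = a * L f) \<and>
     (\<exists>C. \<forall>f\<in>Linf \<rho>. \<forall>B. (AE t in \<rho>. \<bar>f t\<bar> \<le> B) \<longrightarrow> \<bar>L f\<bar> \<le> C * B)"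

definition lin_separable_Linf :: "real measure \<Rightarrow> (real \<Rightarrow> real) set \<Rightarrow> (real \<Rightarrow> real) set \<Rightarrow> bool" where
  "lin_separable_Linf \<rho> A B \<longleftrightarrow> A \<subseteq> Linf \<rho> \<and> B \<subseteq> Linf \<rho> \<and>
     (\<exists>L c. cont_lin_Linf \<rho> L \<and> (\<forall>f\<in>A. L f > c) \<and> (\<forall>f\<in>B. L f < c))"

end

theory Submission
  imports Defs
begin

text \<open>Left multiplication by \<open>R \<in> SO(3)\<close> only reparametrises the restricted Radon transform,
  \<open>radon (rot R \<mu>) \<theta> = radon \<mu> (R\<^sup>T \<theta>)\<close>, so by the invariance of \<open>h\<close> the function
  \<open>N_h\<close> is constant on each orbit and both sets are singletons. Their elements are essentially
  bounded: for atomless \<open>\<rho>\<close> the CDT is a quantile transform, which pushes \<open>\<rho>\<close> forward to the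
  Radon projection. Hence the CDT has the standard deviation of the projection, at least \<open>c\<close>,
  while its values stay in the bounded range of \<open>arccos\<close>. Finally, two bounded functions \<open>f, g\<close>
  that differ on a set of positive measure are separated by \<open>u \<mapsto> \<integral> u sgn (f - g) d\<rho>\<close>.\<close>

section \<open>Distribution functions of atomless measures\<close>

lemma open_downset_eq_lessThan_Sup:
  fixes E :: "real set"
  assumes "open E" "E \<noteq> {}" "bdd_above E" and down_closed: "\<And>y e. y \<le> e \<Longrightarrow> e \<in> E \<Longrightarrow> y \<in> E"
  shows "E = {..<Sup E}"
proof
  have "Sup E \<notin> E"
  proof
    assume "Sup E \<in> E"
    then obtain e where "e > 0" "ball (Sup E) e \<subseteq> E" using \<open>open E\<close> open_contains_ball by blast
    then have "Sup E + e/2 \<in> E" by (auto simp: dist_real_def)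
    then have "Sup E + e/2 \<le> Sup E" using \<open>bdd_above E\<close> cSup_upper by blast
    then show False using \<open>e > 0\<close> by simp
  qed
  show "E \<subseteq> {..<Sup E}"
  proof
    fix e assume "e \<in> E"
    then have "e \<le> Sup E" "e \<noteq> Sup E" using cSup_upper[OF _ \<open>bdd_above E\<close>] \<open>Sup E \<notin> E\<close> by auto
    then show "e \<in> {..<Sup E}" by simp
  qed
  show "{..<Sup E} \<subseteq> E"
  proof
    fix y assume "y \<in> {..<Sup E}"
    then obtain e where "e \<in> E" "y < e"
      using less_cSup_iff[OF \<open>E \<noteq> {}\<close> \<open>bdd_above E\<close>] by auto
    then show "y \<in> E" using down_closed[of y e] by simp
  qed
qed

context real_distribution
begin

lemma borel_measurable_cdf [measurable]: "cdf M \<in> borel_measurable borel"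
  using borel_measurable_mono cdf_nondecreasing by (simp add: mono_def)

lemma measure_lessThan_eq_cdf:
  assumes "measure M {v} = 0"
  shows "measure M {..<v} = cdf M v"
proof -
  have "{..<v} = {..v} - {v}" by auto
  then have "measure M {..<v} = measure M {..v} - measure M {v}"
    by (simp add: finite_measure_Diff)
  then show ?thesis using assms by (simp add: cdf_def)
qed

lemma measure_cdf_le_le:
  assumes no_atoms: "\<forall>t. measure M {t} = 0" and "0 \<le> a" "a < 1"
  shows "measure M {t. cdf M t \<le> a} \<le> a"
proof (cases "{t. cdf M t \<le> a} = {}")
  case True
  then show ?thesis using \<open>0 \<le> a\<close> by simp
next
  case False
  define D where "D = {t. cdf M t \<le> a}"
  have "closed D"
    unfolding D_def using no_atoms isCont_cdf
    by (intro closed_Collect_le continuous_on_const continuous_at_imp_continuous_on) auto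
  have "\<forall>\<^sub>F t in at_top. a < cdf M t"
    using cdf_lim_at_top_prob \<open>a < 1\<close> by (rule order_tendstoD)
  then obtain t1 where "a < cdf M t1"
    by (auto simp: eventually_at_top_linorder)
  have "bdd_above D"
  proof (rule bdd_aboveI)
    show "d \<le> t1" if "d \<in> D" for d
      using that \<open>a < cdf M t1\<close> cdf_nondecreasing[of t1 d] by (force simp: D_def)
  qed
  define u where "u = Sup D"
  have "u \<in> D"
    unfolding u_def using False \<open>bdd_above D\<close> \<open>closed D\<close> by (intro closed_contains_Sup) (auto simp: D_def)
  have "D \<subseteq> {..u}"
    unfolding u_def using \<open>bdd_above D\<close> cSup_upper by auto
  then have "measure M D \<le> cdf M u"
    unfolding cdf_def by (intro finite_measure_mono) auto
  also have "\<dots> \<le> a" using \<open>u \<in> D\<close> by (simp add: D_def)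
  finally show ?thesis by (simp add: D_def)
qed

lemma le_measure_cdf_less:
  assumes no_atoms: "\<forall>t. measure M {t} = 0" and "0 \<le> a" "a \<le> 1"
  shows "a \<le> measure M {t. cdf M t < a}"
proof (cases "a = 0 \<or> {t. cdf M t < a} = UNIV")
  case True
  then show ?thesis using \<open>a \<le> 1\<close> prob_space by auto
next
  case False
  define E where "E = {t. cdf M t < a}"
  have "E \<in> events" unfolding E_def events_eq_borel by measurable
  have down_closed: "y \<in> E" if "y \<le> e" "e \<in> E" for y e
    using that cdf_nondecreasing[of y e] by (auto simp: E_def)
  obtain t0 where "t0 \<notin> E" using False by (auto simp: E_def)
  have "bdd_above E"
  proof (rule bdd_aboveI)
    show "e \<le> t0" if "e \<in> E" for e
      using that \<open>t0 \<notin> E\<close> down_closed[of t0 e] by fastforce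
  qed
  have "\<forall>\<^sub>F t in at_bot. cdf M t < a"
    using cdf_lim_at_bot False \<open>0 \<le> a\<close> by (intro order_tendstoD) auto
  then obtain t1 where "\<And>t. t \<le> t1 \<Longrightarrow> cdf M t < a"
    by (auto simp: eventually_at_bot_linorder)
  then have "E \<noteq> {}" unfolding E_def by blast
  have "open E"
    unfolding E_def using no_atoms isCont_cdf
    by (intro open_Collect_less continuous_on_const continuous_at_imp_continuous_on) auto
  then have E_eq: "E = {..<Sup E}"
    using \<open>E \<noteq> {}\<close> \<open>bdd_above E\<close> down_closed by (rule open_downset_eq_lessThan_Sup)
  then have "Sup E \<notin> E" by auto
  then have "a \<le> cdf M (Sup E)" by (simp add: E_def)
  also have "\<dots> = measure M E"
    using measure_lessThan_eq_cdf no_atoms by (subst E_eq) simp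
  finally show ?thesis by (simp add: E_def)
qed

lemma measure_cdf_less:
  assumes no_atoms: "\<forall>t. measure M {t} = 0" and "0 \<le> a" "a \<le> 1"
  shows "measure M {t. cdf M t < a} = a"
proof (rule antisym)
  show "measure M {t. cdf M t < a} \<le> a"
  proof (cases "a = 1")
    case False
    have "measure M {t. cdf M t < a} \<le> measure M {t. cdf M t \<le> a}"
      by (intro finite_measure_mono) (auto simp: events_eq_borel)
    also have "\<dots> \<le> a" using measure_cdf_le_le False assms by simp
    finally show ?thesis .
  qed simp
qed (rule le_measure_cdf_less[OF assms])

lemma measure_cdf_ge_1:
  assumes no_atoms: "\<forall>t. measure M {t} = 0"
  shows "measure M {t. 1 \<le> cdf M t} = 0"
proof -
  have "{t. 1 \<le> cdf M t} = space M - {t. cdf M t < 1}" by auto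
  moreover have "{t. cdf M t < 1} \<in> events" unfolding events_eq_borel by measurable
  ultimately show ?thesis using prob_compl measure_cdf_less[OF no_atoms, of 1] by simp
qed

end

lemma (in prob_space) abs_integral_le_AE_bound:
  fixes f :: "'a \<Rightarrow> real"
  assumes "f \<in> borel_measurable M" and "AE x in M. \<bar>f x\<bar> \<le> K"
  shows "\<bar>\<integral>x. f x \<partial>M\<bar> \<le> K"
proof -
  have "integrable M f" using assms by (intro integrable_const_bound[where B=K]) auto
  moreover have "AE x in M. f x \<le> K" "AE x in M. -K \<le> f x"
    using assms(2) by (auto elim: eventually_mono)
  ultimately show ?thesis
    using integral_le_const[of f K] integral_ge_const[of f "-K"] by auto
qed

lemma std_fn_eq_std_meas_distr:
  assumes "T \<in> borel_measurable \<rho>" and "distr \<rho> borel T = \<nu>"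
  shows "std_fn \<rho> T = std_meas \<nu>"
proof -
  have "mean_fn \<rho> T = (\<integral>y. y \<partial>\<nu>)"
    using integral_distr[OF assms(1), of "\<lambda>y. y"] assms(2) by (simp add: mean_fn_def)
  moreover have "(\<integral>t. \<bar>T t - m\<bar>\<^sup>2 \<partial>\<rho>) = (\<integral>y. (y - m)\<^sup>2 \<partial>\<nu>)" for m
    using integral_distr[OF assms(1), of "\<lambda>y. (y - m)\<^sup>2"] assms(2) by simp
  ultimately show ?thesis by (simp add: std_fn_def std_meas_def)
qed

section \<open>The quantile transform\<close>

text \<open>The support bounds keep \<open>{y. s < cdf M y}\<close> bounded below for \<open>0 \<le> s < 1\<close>, so that
  \<open>cdf_inv M s\<close> is a genuine infimum rather than the junk value of \<open>Inf\<close> on unbounded sets.\<close>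

locale compactly_supported_distribution = real_distribution M for M +
  fixes lo hi :: real
  assumes cdf_below_lo: "y < lo \<Longrightarrow> cdf M y = 0"
    and cdf_hi: "cdf M hi = 1"
begin

lemma cdf_inv_set_bounds:
  assumes "0 \<le> s" "s < 1"
  shows "hi \<in> {y. s < cdf M y}" and "y \<in> {y. s < cdf M y} \<Longrightarrow> lo \<le> y"
    and "bdd_below {y. s < cdf M y}"
proof -
  show "hi \<in> {y. s < cdf M y}" using assms cdf_hi by simp
  show "lo \<le> y" if "y \<in> {y. s < cdf M y}" for y
  proof (rule ccontr)
    assume "\<not> lo \<le> y"
    then have "cdf M y = 0" by (simp add: cdf_below_lo)
    with that assms show False by simp
  qed
  then show "bdd_below {y. s < cdf M y}" by (rule bdd_belowI)
qed

lemma cdf_inv_in_interval: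
  assumes "0 \<le> s" "s < 1"
  shows "cdf_inv M s \<in> {lo..hi}"
  using cdf_inv_set_bounds[OF assms]
  unfolding cdf_inv_def by (auto intro!: cInf_lower cInf_greatest)

lemma cdf_inv_le:
  assumes "0 \<le> s" "s < cdf M x"
  shows "cdf_inv M s \<le> x"
proof -
  have "s < 1" using assms(2) cdf_bounded_prob[of x] by linarith
  then show ?thesis
    using cdf_inv_set_bounds(3)[OF assms(1)] assms(2)
    unfolding cdf_inv_def by (intro cInf_lower) auto
qed

lemma le_cdf_if_cdf_inv_le:
  assumes "0 \<le> s" "s < 1" "cdf_inv M s \<le> x"
  shows "s \<le> cdf M x"
proof -
  have eventually_ge: "\<forall>\<^sub>F y in at_right x. s \<le> cdf M y"
    using eventually_at_right_less[of x]
  proof (rule eventually_mono)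
    fix y assume "x < y"
    then have "Inf {y. s < cdf M y} < y" using assms(3) unfolding cdf_inv_def by linarith
    moreover have "{y. s < cdf M y} \<noteq> {}" using cdf_inv_set_bounds(1)[OF assms(1,2)] by blast
    ultimately obtain z where "s < cdf M z" "z < y"
      using cInf_less_iff[OF _ cdf_inv_set_bounds(3)[OF assms(1,2)]] by auto
    then show "s \<le> cdf M y" using cdf_nondecreasing[of z y] by simp
  qed
  have "(cdf M \<longlongrightarrow> cdf M x) (at_right x)"
    using cdf_is_right_cont[of x] by (simp add: continuous_within)
  then show ?thesis using eventually_ge by (rule tendsto_lowerbound) simp
qed

lemma cdf_inv_mono:
  assumes "0 \<le> s" "s \<le> s'" "s' < 1"
  shows "cdf_inv M s \<le> cdf_inv M s'"
  using assms cdf_inv_set_bounds(1)[of s'] cdf_inv_set_bounds(3)[of s]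
  unfolding cdf_inv_def by (intro cInf_superset_mono) auto

lemma cdf_inv_ge_1:
  assumes "1 \<le> s"
  shows "cdf_inv M s = Inf {}"
proof -
  have "\<not> s < cdf M y" for y using assms cdf_bounded_prob[of y] by linarith
  then show ?thesis by (simp add: cdf_inv_def)
qed

context
  fixes \<rho> :: "real measure"
  assumes \<rho>: "real_distribution \<rho>"
begin

interpretation \<rho>: real_distribution \<rho> by (fact \<rho>)

text \<open>Off the set where \<open>cdf \<rho> = 1\<close> the transform is monotone.\<close>

lemma cdt_measurable [measurable]: "cdt \<rho> M \<in> borel_measurable borel"
proof -
  define T where "T t = (if cdf \<rho> t < 1 then cdf_inv M (cdf \<rho> t) else hi)" for t
  have "mono T"
  proof
    fix t t' :: real assume "t \<le> t'"
    then show "T t \<le> T t'"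
      using \<rho>.cdf_nondecreasing[of t t'] \<rho>.cdf_nonneg[of t] cdf_inv_mono cdf_inv_in_interval
      by (auto simp: T_def)
  qed
  then have [measurable]: "T \<in> borel_measurable borel" by (rule borel_measurable_mono)
  have "cdt \<rho> M = (\<lambda>t. if cdf \<rho> t < 1 then T t else Inf {})"
    using cdf_inv_ge_1 by (auto simp: cdt_def T_def)
  then show ?thesis by simp
qed

lemma cdt_range: "cdt \<rho> M t \<in> {lo..hi} \<union> {Inf {}}"
  using cdf_inv_in_interval[OF \<rho>.cdf_nonneg] cdf_inv_ge_1 by (cases "cdf \<rho> t < 1") (auto simp: cdt_def)

text \<open>For atomless \<open>\<rho>\<close>, \<open>cdf \<rho>\<close> is uniform on [0,1] and \<open>cdf_inv M\<close> turns uniform samples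
  into \<open>M\<close>-samples.\<close>

lemma cdf_le_measure_cdt_le:
  assumes no_atoms: "\<forall>t. measure \<rho> {t} = 0"
  shows "cdf M x \<le> measure \<rho> {t. cdt \<rho> M t \<le> x}"
proof -
  have "cdf M x \<le> measure \<rho> {t. cdf \<rho> t < cdf M x}"
    using \<rho>.measure_cdf_less[OF no_atoms cdf_nonneg cdf_bounded_prob] by simp
  also have "\<dots> \<le> measure \<rho> {t. cdt \<rho> M t \<le> x}"
  proof (rule \<rho>.finite_measure_mono)
    show "{t. cdf \<rho> t < cdf M x} \<subseteq> {t. cdt \<rho> M t \<le> x}"
      using cdf_inv_le[OF \<rho>.cdf_nonneg] by (auto simp: cdt_def)
    show "{t. cdt \<rho> M t \<le> x} \<in> sets \<rho>" unfolding \<rho>.events_eq_borel by measurable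
  qed
  finally show ?thesis .
qed

lemma measure_cdt_le_le_cdf:
  assumes no_atoms: "\<forall>t. measure \<rho> {t} = 0"
  shows "measure \<rho> {t. cdt \<rho> M t \<le> x} \<le> cdf M x"
proof (cases "cdf M x = 1")
  case False
  have [simp]: "{t. cdf \<rho> t \<le> b} \<in> sets \<rho>" "{t. b \<le> cdf \<rho> t} \<in> sets \<rho>" for b
    unfolding \<rho>.events_eq_borel by measurable
  have "{t. cdt \<rho> M t \<le> x} \<subseteq> {t. cdf \<rho> t \<le> cdf M x} \<union> {t. 1 \<le> cdf \<rho> t}"
  proof
    fix t assume "t \<in> {t. cdt \<rho> M t \<le> x}"
    then have "cdf_inv M (cdf \<rho> t) \<le> x" by (simp add: cdt_def)
    then show "t \<in> {t. cdf \<rho> t \<le> cdf M x} \<union> {t. 1 \<le> cdf \<rho> t}"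
      using le_cdf_if_cdf_inv_le[OF \<rho>.cdf_nonneg] by (cases "cdf \<rho> t < 1") auto
  qed
  then have "measure \<rho> {t. cdt \<rho> M t \<le> x}
      \<le> measure \<rho> ({t. cdf \<rho> t \<le> cdf M x} \<union> {t. 1 \<le> cdf \<rho> t})"
    by (intro \<rho>.finite_measure_mono) auto
  also have "\<dots> = measure \<rho> {t. cdf \<rho> t \<le> cdf M x}"
    using \<rho>.measure_cdf_ge_1[OF no_atoms] by (intro \<rho>.measure_zero_union) auto
  also have "\<dots> \<le> cdf M x"
    using \<rho>.measure_cdf_le_le[OF no_atoms cdf_nonneg] False cdf_bounded_prob[of x] by simp
  finally show ?thesis .
qed (simp add: \<rho>.measure_le_1)

lemma distr_cdt:
  assumes no_atoms: "\<forall>t. measure \<rho> {t} = 0"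
  shows "distr \<rho> borel (cdt \<rho> M) = M"
proof (rule cdf_unique)
  show "real_distribution (distr \<rho> borel (cdt \<rho> M))" by simp
  show "real_distribution M" by unfold_locales
  have "cdf (distr \<rho> borel (cdt \<rho> M)) x = measure \<rho> {t. cdt \<rho> M t \<le> x}" for x
    unfolding cdf_def by (simp add: measure_distr vimage_def)
  then show "cdf (distr \<rho> borel (cdt \<rho> M)) = cdf M"
    using cdf_le_measure_cdt_le[OF no_atoms] measure_cdt_le_le_cdf[OF no_atoms]
    by (intro ext antisym) simp_all
qed

end

end

section \<open>The restricted Radon transform on SO(3)\<close>

text \<open>Outside \<open>[-1,1]\<close>, \<open>arccos\<close> is the junk value \<open>THE x. False\<close>. On \<open>SO3\<close> the argument
  of \<open>phi\<close> does lie in \<open>[-1,1]\<close>; we avoid proving this, since boundedness of \<open>phi\<close> is all that is needed.\<close>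

lemma arccos_outside_interval:
  assumes "y \<notin> {-1..1}"
  shows "arccos y = arccos 2"
proof -
  have "(\<lambda>x. 0 \<le> x \<and> x \<le> pi \<and> cos x = z) = (\<lambda>x. False)" if "z \<notin> {-1..1}" for z :: real
    using that cos_ge_minus_one cos_le_one by (metis atLeastAtMost_iff)
  then have "arccos z = (THE x. False)" if "z \<notin> {-1..1}" for z
    using that unfolding arccos_def by presburger
  then show ?thesis using assms by simp
qed

lemma arccos_in_range: "arccos y \<in> {0..pi} \<union> {arccos 2}"
  using arccos_bounded[of y] arccos_outside_interval[of y] by (cases "y \<in> {-1..1}") auto

lemma borel_measurable_arccos [measurable]: "arccos \<in> borel_measurable borel"
proof -
  have "arccos y = (if y \<in> {-1..1} then arccos y else arccos 2)" for y
    using arccos_outside_interval[of y] by simp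
  then have "arccos = (\<lambda>y. if y \<in> {-1..1} then arccos y else arccos 2)" ..
  also have "\<dots> \<in> borel_measurable borel"
    by (intro borel_measurable_continuous_on_if continuous_on_arccos' continuous_on_const) auto
  finally show ?thesis .
qed

lemma borel_measurable_phi [measurable]: "(\<lambda>x. phi x \<theta>) \<in> borel_measurable borel"
proof -
  have "continuous_on UNIV (\<lambda>x::mat3. (trace (transpose \<theta> ** x) - 1) / 2)"
    unfolding matrix_matrix_mult_def trace_def by (intro continuous_intros) auto
  then show ?thesis
    unfolding phi_def by (intro measurable_compose[OF _ borel_measurable_arccos] borel_measurable_continuous_onI)
qed

lemma phi_bounds: "phi x \<theta> \<in> {min 0 (arccos 2) .. max pi (arccos 2)}"
  using arccos_in_range[of "(trace (transpose \<theta> ** x) - 1) / 2"] by (auto simp: phi_def)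

lemma phi_mult_left: "phi (R ** x) \<theta> = phi x (transpose R ** \<theta>)"
  by (simp add: phi_def matrix_transpose_mul matrix_mul_assoc)

lemma SO3_mult: "A \<in> SO3 \<Longrightarrow> B \<in> SO3 \<Longrightarrow> A ** B \<in> SO3"
  by (simp add: SO3_def orthogonal_matrix_mul det_mul)

lemma SO3_transpose: "A \<in> SO3 \<Longrightarrow> transpose A \<in> SO3"
  by (simp add: SO3_def)

lemma mat_1_in_SO3: "mat 1 \<in> SO3"
  by (simp add: SO3_def orthogonal_matrix_id)

lemma bij_betw_transpose_mult:
  assumes "R \<in> SO3"
  shows "bij_betw (\<lambda>\<theta>. transpose R ** \<theta>) SO3 SO3"
proof (rule bij_betw_byWitness[where f'="\<lambda>\<theta>. R ** \<theta>"])
  have "transpose R ** R = mat 1" "R ** transpose R = mat 1"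
    using assms by (auto simp: SO3_def orthogonal_matrix_def)
  then show "\<forall>\<theta>\<in>SO3. R ** (transpose R ** \<theta>) = \<theta>" "\<forall>\<theta>\<in>SO3. transpose R ** (R ** \<theta>) = \<theta>"
    by (simp_all add: matrix_mul_assoc)
  show "(\<lambda>\<theta>. transpose R ** \<theta>) ` SO3 \<subseteq> SO3" "(\<lambda>\<theta>. R ** \<theta>) ` SO3 \<subseteq> SO3"
    using assms SO3_mult SO3_transpose by auto
qed

lemma prob_SO3_measurable_eq:
  "prob_SO3 \<mu> \<Longrightarrow> measurable \<mu> N = measurable (restrict_space borel SO3) N"
  unfolding prob_SO3_def by (intro measurable_cong_sets) auto

lemma measurable_phi_prob_SO3:
  "prob_SO3 \<mu> \<Longrightarrow> (\<lambda>x. phi x \<theta>) \<in> borel_measurable \<mu>"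
  by (simp add: prob_SO3_measurable_eq measurable_restrict_space1)

lemma measurable_mult_left_prob_SO3:
  assumes "prob_SO3 \<mu>" "R \<in> SO3"
  shows "(\<lambda>x. R ** x) \<in> measurable \<mu> (restrict_space borel SO3)"
proof -
  have "continuous_on UNIV (\<lambda>x::mat3. R ** x)"
    unfolding matrix_matrix_mult_def by (intro continuous_intros)
  then show ?thesis
    using assms SO3_mult
    by (simp add: prob_SO3_measurable_eq measurable_restrict_space3 borel_measurable_continuous_onI)
qed

lemma radon_rot:
  assumes "prob_SO3 \<mu>" "R \<in> SO3"
  shows "radon (rot R \<mu>) \<theta> = radon \<mu> (transpose R ** \<theta>)"
proof -
  have "radon (rot R \<mu>) \<theta> = distr \<mu> borel ((\<lambda>x. phi x \<theta>) \<circ> (\<lambda>x. R ** x))"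
    unfolding radon_def rot_def
    by (rule distr_distr[OF measurable_restrict_space1 measurable_mult_left_prob_SO3[OF assms]]) simp
  also have "\<dots> = radon \<mu> (transpose R ** \<theta>)"
    unfolding radon_def by (rule distr_cong) (auto simp: phi_mult_left)
  finally show ?thesis .
qed

lemma prob_SO3_rot:
  assumes "prob_SO3 \<mu>" "R \<in> SO3"
  shows "prob_SO3 (rot R \<mu>)"
proof -
  interpret prob_space \<mu> using assms(1) by (simp add: prob_SO3_def)
  show ?thesis
    unfolding prob_SO3_def rot_def using prob_space_distr[OF measurable_mult_left_prob_SO3[OF assms]] by simp
qed

lemma rot_in_P_plus:
  assumes "\<mu> \<in> P_plus" "R \<in> SO3"
  shows "rot R \<mu> \<in> P_plus"
proof -
  obtain c where "c > 0" "\<forall>\<theta>\<in>SO3. c \<le> std_meas (radon \<mu> \<theta>)" and "prob_SO3 \<mu>"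
    using assms(1) by (auto simp: P_plus_def)
  then show ?thesis
    using radon_rot prob_SO3_rot assms(2) SO3_mult SO3_transpose by (auto simp: P_plus_def)
qed

lemma N_h_rot:
  assumes h_invariant: "\<forall>g \<psi>. bij_betw \<psi> SO3 SO3 \<longrightarrow> h (g \<circ> \<psi>) = h g"
    and "prob_SO3 \<mu>" "R \<in> SO3"
  shows "N_h h \<rho> (rot R \<mu>) = N_h h \<rho> \<mu>"
proof
  fix t
  have "(\<lambda>\<theta>. N_phi \<rho> (rot R \<mu>) t \<theta>) = (\<lambda>\<theta>. N_phi \<rho> \<mu> t \<theta>) \<circ> (\<lambda>\<theta>. transpose R ** \<theta>)"
    using radon_rot[OF assms(2,3)] by (auto simp: N_phi_def)
  then show "N_h h \<rho> (rot R \<mu>) t = N_h h \<rho> \<mu> t"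
    unfolding N_h_def using h_invariant bij_betw_transpose_mult[OF assms(3)] by simp
qed

lemma N_h_orbit:
  assumes "\<forall>g \<psi>. bij_betw \<psi> SO3 SO3 \<longrightarrow> h (g \<circ> \<psi>) = h g" and "prob_SO3 \<mu>"
  shows "N_h h \<rho> ` (\<lambda>R. rot R \<mu>) ` SO3 = {N_h h \<rho> \<mu>}"
proof -
  have "N_h h \<rho> ` (\<lambda>R. rot R \<mu>) ` SO3 = (\<lambda>R. N_h h \<rho> \<mu>) ` SO3"
    using N_h_rot[OF assms] by (simp add: image_image)
  then show ?thesis using image_constant[OF mat_1_in_SO3] by simp
qed

section \<open>Essential boundedness and separation\<close>

lemma radon_compactly_supported:
  assumes "prob_SO3 \<mu>"
  shows "compactly_supported_distribution (radon \<mu> \<theta>) (min 0 (arccos 2)) (max pi (arccos 2))"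
proof -
  interpret prob_space \<mu> using assms by (simp add: prob_SO3_def)
  have meas: "(\<lambda>x. phi x \<theta>) \<in> borel_measurable \<mu>" by (rule measurable_phi_prob_SO3[OF assms])
  have cdf_radon: "cdf (radon \<mu> \<theta>) y = measure \<mu> ((\<lambda>x. phi x \<theta>) -` {..y} \<inter> space \<mu>)" for y
    unfolding cdf_def radon_def using meas by (simp add: measure_distr)
  show ?thesis
  proof (intro compactly_supported_distribution.intro compactly_supported_distribution_axioms.intro)
    show "real_distribution (radon \<mu> \<theta>)" unfolding radon_def using meas by simp
    show "cdf (radon \<mu> \<theta>) y = 0" if "y < min 0 (arccos 2)" for y
    proof -
      have "y < phi x \<theta>" for x using that phi_bounds[of x \<theta>] by auto
      then have "(\<lambda>x. phi x \<theta>) -` {..y} = {}" by (auto simp: not_le[of _ y, symmetric])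
      then show ?thesis using cdf_radon by simp
    qed
    have "(\<lambda>x. phi x \<theta>) -` {..max pi (arccos 2)} \<inter> space \<mu> = space \<mu>"
      using phi_bounds[of _ \<theta>] by auto
    then show "cdf (radon \<mu> \<theta>) (max pi (arccos 2)) = 1" using cdf_radon prob_space by simp
  qed
qed

lemma abs_normalized_le:
  fixes T :: "real \<Rightarrow> real"
  assumes "\<forall>t. \<bar>T t\<bar> \<le> K" "\<bar>m\<bar> \<le> K" "0 < c" "c \<le> s"
  shows "\<bar>(T t - m) / s\<bar> \<le> 2 * K / c"
proof -
  have "\<bar>T t\<bar> \<le> K" using assms(1) by simp
  then have "0 \<le> 2 * K" "\<bar>T t - m\<bar> \<le> 2 * K" using assms(2) by linarith+
  then have "\<bar>T t - m\<bar> / s \<le> 2 * K / c" using assms(3,4) by (rule frac_le)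
  then show ?thesis using assms(3,4) by (simp add: abs_divide)
qed

lemma N_phi_bounded:
  assumes \<rho>: "real_distribution \<rho>" and no_atoms: "\<forall>t. measure \<rho> {t} = 0" and "\<mu> \<in> P_plus"
  shows "\<exists>B. \<forall>t. \<forall>\<theta>\<in>SO3. \<bar>N_phi \<rho> \<mu> t \<theta>\<bar> \<le> B"
proof -
  interpret \<rho>: real_distribution \<rho> by (fact \<rho>)
  obtain c where "0 < c" and c: "\<forall>\<theta>\<in>SO3. c \<le> std_meas (radon \<mu> \<theta>)" and "prob_SO3 \<mu>"
    using assms(3) by (auto simp: P_plus_def)
  define lo hi where "lo = min 0 (arccos 2)" and "hi = max pi (arccos 2)"
  define K where "K = max (max \<bar>lo\<bar> \<bar>hi\<bar>) \<bar>Inf ({}::real set)\<bar>"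
  have "\<bar>N_phi \<rho> \<mu> t \<theta>\<bar> \<le> 2 * K / c" if "\<theta> \<in> SO3" for t \<theta>
  proof -
    interpret \<nu>: compactly_supported_distribution "radon \<mu> \<theta>" lo hi
      unfolding lo_def hi_def using \<open>prob_SO3 \<mu>\<close> by (rule radon_compactly_supported)
    define T where "T = cdt \<rho> (radon \<mu> \<theta>)"
    have "\<bar>T s\<bar> \<le> K" for s
      using \<nu>.cdt_range[OF \<rho>, of s] unfolding T_def K_def by auto
    then have T_bound: "\<forall>s. \<bar>T s\<bar> \<le> K" ..
    have T_meas: "T \<in> borel_measurable \<rho>" using \<nu>.cdt_measurable[OF \<rho>] by (simp add: T_def)
    have "std_fn \<rho> T = std_meas (radon \<mu> \<theta>)"
      using T_meas \<nu>.distr_cdt[OF \<rho> no_atoms] by (intro std_fn_eq_std_meas_distr) (simp_all add: T_def)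
    then have "c \<le> std_fn \<rho> T" using c that by simp
    moreover have "\<bar>mean_fn \<rho> T\<bar> \<le> K"
      unfolding mean_fn_def using T_meas T_bound by (intro \<rho>.abs_integral_le_AE_bound) auto
    ultimately show ?thesis
      unfolding N_phi_def T_def[symmetric] using abs_normalized_le[OF T_bound _ \<open>0 < c\<close>] by blast
  qed
  then show ?thesis by blast
qed

lemma N_h_in_Linf:
  assumes \<rho>: "real_distribution \<rho>" and no_atoms: "\<forall>t. measure \<rho> {t} = 0" and "\<mu> \<in> P_plus"
    and h_bounded: "\<forall>B. \<exists>C. \<forall>g. (\<forall>\<theta>\<in>SO3. \<bar>g \<theta>\<bar> \<le> B) \<longrightarrow> \<bar>h g\<bar> \<le> C"
    and "N_h h \<rho> \<mu> \<in> borel_measurable borel"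
  shows "N_h h \<rho> \<mu> \<in> Linf \<rho>"
proof -
  obtain B where "\<forall>t. \<forall>\<theta>\<in>SO3. \<bar>N_phi \<rho> \<mu> t \<theta>\<bar> \<le> B"
    using N_phi_bounded[OF assms(1-3)] by blast
  moreover obtain C where "\<forall>g. (\<forall>\<theta>\<in>SO3. \<bar>g \<theta>\<bar> \<le> B) \<longrightarrow> \<bar>h g\<bar> \<le> C"
    using h_bounded by blast
  ultimately have "\<bar>N_h h \<rho> \<mu> t\<bar> \<le> C" for t by (simp add: N_h_def)
  then show ?thesis
    using assms(5) real_distribution.measurable_finite_borel[OF \<rho>] by (auto simp: Linf_def)
qed

lemma (in real_distribution) integrable_Linf:
  assumes "u \<in> Linf M"
  shows "integrable M u"
proof -
  obtain B where "AE t in M. \<bar>u t\<bar> \<le> B" "u \<in> borel_measurable M"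
    using assms by (auto simp: Linf_def)
  then show ?thesis by (intro integrable_const_bound[where B=B]) auto
qed

lemma AE_abs_mult_le:
  assumes "AE t in M. \<bar>u t\<bar> \<le> B" and "\<forall>t. \<bar>s t\<bar> \<le> 1"
  shows "AE t in M. \<bar>u t * s t\<bar> \<le> (B::real)"
  using assms(1)
proof (rule eventually_mono)
  show "\<bar>u t * s t\<bar> \<le> B" if "\<bar>u t\<bar> \<le> B" for t
    using that assms(2) mult_left_le[of "\<bar>s t\<bar>" "\<bar>u t\<bar>"] by (simp add: abs_mult)
qed

lemma Linf_mult_bounded:
  assumes "u \<in> Linf \<rho>" "s \<in> borel_measurable \<rho>" "\<forall>t. \<bar>s t\<bar> \<le> 1"
  shows "(\<lambda>t. u t * s t) \<in> Linf \<rho>"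
proof -
  obtain B where "AE t in \<rho>. \<bar>u t\<bar> \<le> B" "u \<in> borel_measurable \<rho>"
    using assms(1) by (auto simp: Linf_def)
  then show ?thesis
    using assms(2) AE_abs_mult_le[OF _ assms(3)] by (auto simp: Linf_def)
qed

lemma (in real_distribution) cont_lin_Linf_integral_mult:
  assumes "s \<in> borel_measurable M" and s_bound: "\<forall>t. \<bar>s t\<bar> \<le> 1"
  shows "cont_lin_Linf M (\<lambda>u. \<integral>t. u t * s t \<partial>M)"
proof -
  note Linf_mult = Linf_mult_bounded[OF _ assms]
  show ?thesis
    unfolding cont_lin_Linf_def
  proof (intro conjI ballI allI impI exI[of _ 1])
    fix u v assume "u \<in> Linf M" "v \<in> Linf M"
    then show "(\<integral>t. (u t + v t) * s t \<partial>M) = (\<integral>t. u t * s t \<partial>M) + (\<integral>t. v t * s t \<partial>M)"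
      using integrable_Linf[OF Linf_mult] by (simp add: distrib_right)
  next
    fix a u
    show "(\<integral>t. a * u t * s t \<partial>M) = a * (\<integral>t. u t * s t \<partial>M)" by (simp add: mult.assoc)
  next
    fix u B assume "u \<in> Linf M" "AE t in M. \<bar>u t\<bar> \<le> B"
    then show "\<bar>\<integral>t. u t * s t \<partial>M\<bar> \<le> 1 * B"
      using Linf_mult AE_abs_mult_le[OF _ s_bound] abs_integral_le_AE_bound by (simp add: Linf_def)
  qed
qed

lemma (in real_distribution) lin_separable_Linf_singletons:
  assumes "f \<in> Linf M" "g \<in> Linf M" "\<not> (AE t in M. f t = g t)"
  shows "lin_separable_Linf M {f} {g}"
proof -
  define s where "s t = sgn (f t - g t)" for t
  define L where "L u = (\<integral>t. u t * s t \<partial>M)" for u :: "real \<Rightarrow> real"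
  have [measurable]: "f \<in> borel_measurable M" "g \<in> borel_measurable M"
    using assms(1,2) by (auto simp: Linf_def)
  have s_meas: "s \<in> borel_measurable M" unfolding s_def by measurable
  have s_bound: "\<forall>t. \<bar>s t\<bar> \<le> 1" by (simp add: s_def abs_sgn_eq)
  have "cont_lin_Linf M L"
    unfolding L_def using s_meas s_bound by (rule cont_lin_Linf_integral_mult)
  have integrable_diff: "integrable M (\<lambda>t. f t - g t)"
    using integrable_Linf assms(1,2) by auto
  have "L f - L g = (\<integral>t. (f t - g t) * s t \<partial>M)"
    unfolding L_def using integrable_Linf[OF Linf_mult_bounded[OF _ s_meas s_bound]] assms(1,2)
    by (simp add: left_diff_distrib)
  also have "\<dots> = (\<integral>t. \<bar>f t - g t\<bar> \<partial>M)"
    by (simp add: s_def abs_sgn)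
  also have "\<dots> > 0"
  proof -
    have "(\<integral>t. \<bar>f t - g t\<bar> \<partial>M) \<noteq> 0"
      using integral_nonneg_eq_0_iff_AE[of M "\<lambda>t. \<bar>f t - g t\<bar>"] integrable_diff assms(3) by auto
    then show ?thesis by (simp add: order_less_le)
  qed
  finally have "L g < L f" by simp
  then show ?thesis
    unfolding lin_separable_Linf_def using assms(1,2) \<open>cont_lin_Linf M L\<close>
    by (intro conjI exI[of _ L] exI[of _ "(L f + L g) / 2"]) auto
qed

theorem theorem20:
  fixes \<rho> :: "real measure" and h :: "(mat3 \<Rightarrow> real) \<Rightarrow> real" and \<mu>0 \<nu>0 :: "mat3 measure"
  assumes rho_borel: "sets \<rho> = sets borel" and rho_prob: "prob_space \<rho>"
    and rho_no_atoms: "\<forall>t. measure \<rho> {t} = 0"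
    and h_bounded: "\<forall>B. \<exists>C. \<forall>g. (\<forall>\<theta>\<in>SO3. \<bar>g \<theta>\<bar> \<le> B) \<longrightarrow> \<bar>h g\<bar> \<le> C"
    and h_invariant: "\<forall>g \<psi>. bij_betw \<psi> SO3 SO3 \<longrightarrow> h (g \<circ> \<psi>) = h g"
    and mu0: "\<mu>0 \<in> P_plus" and nu0: "\<nu>0 \<in> P_plus"
    and meas_mu0: "N_h h \<rho> \<mu>0 \<in> borel_measurable borel"
    and meas_nu0: "N_h h \<rho> \<nu>0 \<in> borel_measurable borel"
    and neq: "\<not> (AE t in \<rho>. N_h h \<rho> \<mu>0 t = N_h h \<rho> \<nu>0 t)"
  shows "(\<lambda>R. rot R \<mu>0) ` SO3 \<subseteq> P_plus \<and> (\<lambda>R. rot R \<nu>0) ` SO3 \<subseteq> P_plus \<and>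
         lin_separable_Linf \<rho> (N_h h \<rho> ` ((\<lambda>R. rot R \<mu>0) ` SO3))
                               (N_h h \<rho> ` ((\<lambda>R. rot R \<nu>0) ` SO3))"
proof -
  have \<rho>: "real_distribution \<rho>"
    using rho_prob rho_borel by (simp add: real_distribution_def real_distribution_axioms_def)
  have "prob_SO3 \<mu>0" "prob_SO3 \<nu>0" using mu0 nu0 by (simp_all add: P_plus_def)
  then have orbits: "N_h h \<rho> ` (\<lambda>R. rot R \<mu>0) ` SO3 = {N_h h \<rho> \<mu>0}"
      "N_h h \<rho> ` (\<lambda>R. rot R \<nu>0) ` SO3 = {N_h h \<rho> \<nu>0}"
    using N_h_orbit[OF h_invariant] by auto
  have "N_h h \<rho> \<mu>0 \<in> Linf \<rho>" "N_h h \<rho> \<nu>0 \<in> Linf \<rho>"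
    using N_h_in_Linf[OF \<rho> rho_no_atoms _ h_bounded] mu0 nu0 meas_mu0 meas_nu0 by auto
  then have "lin_separable_Linf \<rho> {N_h h \<rho> \<mu>0} {N_h h \<rho> \<nu>0}"
    using neq by (rule real_distribution.lin_separable_Linf_singletons[OF \<rho>])
  then show ?thesis using orbits rot_in_P_plus mu0 nu0 by auto
qed

end
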